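(* Let $\alpha,\tilde\alpha,\beta,\gamma\in\mathbb{R}$ and let $f\colon\mathbb{R}^4\to\mathbb{R}^4$ be defined by \[ f(x,y,z,\omega)=\big(y,\ \alpha x+\beta z+\gamma\sin(x),\ \omega,\ \tilde\alpha x-\beta z-\gamma\sin(x)\big). \] If $\tilde\alpha=-\alpha$ and $\beta\neq0$, then $f$ is not topologically transitive.
   Context: A map $f\colon\mathbb{R}^k\to\mathbb{R}^k$ is topologically transitive if for all (nonempty) open sets $V,W\subset\mathbb{R}^k$ there exists $n\ge1$ such that $V\cap f^{(n)}(W)\neq\emptyset$, where $f^{(n)}$ denotes the $n$-th iterate. *)

theory Defs
  imports "HOL-Analysis.Analysis"
begin

definition top_transitive :: "('a::topological_space \<Rightarrow> 'a) \<Rightarrow> bool" where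
  "top_transitive f \<longleftrightarrow>
     (\<forall>V W. open V \<and> V \<noteq> {} \<and> open W \<and> W \<noteq> {} \<longrightarrow>
        (\<exists>n::nat. n \<ge> 1 \<and> V \<inter> (f ^^ n) ` W \<noteq> {}))"

definition fmap :: "real \<Rightarrow> real \<Rightarrow> real \<Rightarrow> real \<Rightarrow> real^4 \<Rightarrow> real^4" where
  "fmap \<alpha> \<alpha>' \<beta> \<gamma> v =
     vector [v$2,
             \<alpha> * v$1 + \<beta> * v$3 + \<gamma> * sin (v$1),
             v$4,
             \<alpha>' * v$1 - \<beta> * v$3 - \<gamma> * sin (v$1)]"

end

theory Submission
  imports Defs
begin

text \<open>A topologically transitive map has dense range, since every iterate f^n with n \<ge> 1
  takes values in the range of f. For \<alpha>' = -\<alpha> the second and fourth components of f(v)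
  always sum to zero, so the range of f lies in a hyperplane, which is closed and proper.\<close>

lemma range_funpow_Suc_subset:
  fixes f :: "'a \<Rightarrow> 'a"
  shows "range (f ^^ Suc n) \<subseteq> range f"
  by auto

lemma top_transitive_imp_dense_range:
  assumes "top_transitive f"
  shows "closure (range f) = UNIV"
proof (rule ccontr)
  assume "closure (range f) \<noteq> UNIV"
  then have V: "open (- closure (range f))" "- closure (range f) \<noteq> {}"
    by (auto simp: open_Compl)
  obtain n where "n \<ge> 1" and meets: "- closure (range f) \<inter> range (f ^^ n) \<noteq> {}"
    using assms V unfolding top_transitive_def by (meson open_UNIV UNIV_not_empty)
  then obtain m where "n = Suc m"
    by (cases n) auto
  then have "range (f ^^ n) \<subseteq> closure (range f)"
    using range_funpow_Suc_subset closure_subset by (metis order_trans)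
  with meets show False
    by blast
qed

lemma vector_4 [simp]:
  "(vector [x, y, z, w] :: 'a::zero^4) $ 1 = x"
  "(vector [x, y, z, w] :: 'a::zero^4) $ 2 = y"
  "(vector [x, y, z, w] :: 'a::zero^4) $ 3 = z"
  "(vector [x, y, z, w] :: 'a::zero^4) $ 4 = w"
  unfolding vector_def by simp_all

lemma fmap_2_plus_fmap_4:
  assumes "\<alpha>' = - \<alpha>"
  shows "fmap \<alpha> \<alpha>' \<beta> \<gamma> v $ 2 + fmap \<alpha> \<alpha>' \<beta> \<gamma> v $ 4 = 0"
  using assms by (simp add: fmap_def)

theorem proposition1:
  fixes \<alpha> \<alpha>' \<beta> \<gamma> :: real
  assumes "\<alpha>' = - \<alpha>" and "\<beta> \<noteq> 0"
  shows "\<not> top_transitive (fmap \<alpha> \<alpha>' \<beta> \<gamma>)"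
proof
  define H :: "(real^4) set" where "H = {v. v $ 2 + v $ 4 = 0}"
  assume "top_transitive (fmap \<alpha> \<alpha>' \<beta> \<gamma>)"
  then have "closure (range (fmap \<alpha> \<alpha>' \<beta> \<gamma>)) = UNIV"
    by (rule top_transitive_imp_dense_range)
  moreover have "closed H"
    unfolding H_def by (intro closed_Collect_eq continuous_intros)
  moreover have "range (fmap \<alpha> \<alpha>' \<beta> \<gamma>) \<subseteq> H"
    unfolding H_def using fmap_2_plus_fmap_4[OF assms(1)] by auto
  ultimately have "(\<chi> i. 1) \<in> H"
    using closure_minimal by blast
  then show False
    unfolding H_def by simp
qed

end
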